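(* Let $P_1$ be the uniform distribution on $[0,\frac12]$, let $P_2$ be the uniform distribution on $[\frac34,1]$, and let $P=\frac34P_1+\frac14P_2$. Then the set $\{\frac14,\frac78\}$ is an optimal set of two-means for $P$, and the corresponding quantization error is $V_2=\frac{13}{768}$.
   Context: For a finite set $\alpha\subset\mathbb R$, $V(P;\alpha)=\int\min_{a\in\alpha}(x-a)^2\,dP(x)$; $V_n=\inf\{V(P;\alpha):\mathrm{card}(\alpha)\le n\}$; an optimal set of $n$-means is a set $\alpha$ with $\mathrm{card}(\alpha)\le n$ and $V(P;\alpha)=V_n$. *)

theory Defs
  imports "HOL-Probability.Probability"
begin

definition qerr :: "real measure \<Rightarrow> real set \<Rightarrow> real" where
  "qerr M \<alpha> = (\<integral>x. Min ((\<lambda>a. (x - a)^2) ` \<alpha>) \<partial>M)"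

definition Vn :: "real measure \<Rightarrow> nat \<Rightarrow> real" where
  "Vn M n = Inf {qerr M \<alpha> | \<alpha>. finite \<alpha> \<and> \<alpha> \<noteq> {} \<and> card \<alpha> \<le> n}"

definition optimal_n_means :: "real measure \<Rightarrow> nat \<Rightarrow> real set \<Rightarrow> bool" where
  "optimal_n_means M n \<alpha> \<longleftrightarrow> finite \<alpha> \<and> \<alpha> \<noteq> {} \<and> card \<alpha> \<le> n \<and> qerr M \<alpha> = Vn M n"

definition unif_pdf :: "real \<Rightarrow> real \<Rightarrow> real \<Rightarrow> real" where
  "unif_pdf a b x = indicator {a..b} x / (b - a)"

definition P :: "real measure" where
  "P = density lborel (\<lambda>x. ennreal (3/4 * unif_pdf 0 (1/2) x + 1/4 * unif_pdf (3/4) 1 x))"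

end

theory Submission
  imports Defs
begin

text \<open>
  A set \<open>{a, b}\<close> with \<open>a \<le> b\<close> splits the support of \<open>P\<close> at the midpoint \<open>(a + b)/2\<close>,
  which lies in at most one of the two intervals; so either \<open>[3/4, 1]\<close> is served entirely
  by \<open>b\<close> or \<open>[0, 1/2]\<close> entirely by \<open>a\<close>. For a fixed cut the error is a quadratic in each
  centre, minimised at the centroid of its cell. Completing both squares leaves a cubic in the
  position of the cut which is nonnegative and vanishes exactly when the cut falls into the gap
  \<open>[1/2, 3/4]\<close>; the centroids are then \<open>1/4\<close> and \<open>7/8\<close>.
\<close>

definition sq_dev_integral :: "real \<Rightarrow> real \<Rightarrow> real \<Rightarrow> real" where
  "sq_dev_integral u v a = ((v - a)^3 - (u - a)^3) / 3"

lemma has_integral_sq_dev: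
  fixes u v a :: real
  assumes "u \<le> v"
  shows "((\<lambda>x. (x - a)^2) has_integral sq_dev_integral u v a) {u..v}"
proof -
  have "((\<lambda>x. (x - a)^2) has_integral (v - a)^3 / 3 - (u - a)^3 / 3) {u..v}"
    by (rule fundamental_theorem_of_calculus[OF assms])
      (auto intro!: derivative_eq_intros simp: has_real_derivative_iff_has_vector_derivative[symmetric])
  then show ?thesis
    by (simp add: sq_dev_integral_def diff_divide_distrib)
qed

lemma min_sq_dist_eq_left:
  fixes a b x :: real
  assumes "a \<le> b" "x \<le> (a + b) / 2"
  shows "min ((x - a)^2) ((x - b)^2) = (x - a)^2"
proof -
  have "(x - b)^2 - (x - a)^2 = (b - a) * ((a + b) - 2 * x)"
    by (simp add: power2_eq_square algebra_simps)
  also have "\<dots> \<ge> 0"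
    using assms by simp
  finally show ?thesis
    by simp
qed

lemma min_sq_dist_eq_right:
  fixes a b x :: real
  assumes "a \<le> b" "(a + b) / 2 \<le> x"
  shows "min ((x - a)^2) ((x - b)^2) = (x - b)^2"
proof -
  have "(x - a)^2 - (x - b)^2 = (b - a) * (2 * x - (a + b))"
    by (simp add: power2_eq_square algebra_simps)
  also have "\<dots> \<ge> 0"
    using assms by simp
  finally show ?thesis
    by simp
qed

lemma has_integral_min_sq_dist:
  fixes u v a b :: real
  assumes "u \<le> v" "a \<le> b"
  defines "c \<equiv> max u (min ((a + b) / 2) v)"
  shows "((\<lambda>x. min ((x - a)^2) ((x - b)^2)) has_integral
           sq_dev_integral u c a + sq_dev_integral c v b) {u..v}"
proof -
  let ?f = "\<lambda>x::real. min ((x - a)^2) ((x - b)^2)"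
  have uc: "u \<le> c" and cv: "c \<le> v"
    using assms(1) by (auto simp: c_def)
  have left: "(?f has_integral sq_dev_integral u c a) {u..c}"
  proof (cases "u = c")
    case True
    then show ?thesis
      using has_integral_refl(1)[of ?f c] by (simp add: sq_dev_integral_def)
  next
    case False
    then have "c \<le> (a + b) / 2"
      using uc by (auto simp: c_def max_def min_def split: if_splits)
    then have "(?f has_integral sq_dev_integral u c a) {u..c} \<longleftrightarrow>
               ((\<lambda>x. (x - a)^2) has_integral sq_dev_integral u c a) {u..c}"
      using assms(2) by (intro has_integral_cong) (auto intro!: min_sq_dist_eq_left)
    then show ?thesis
      using has_integral_sq_dev[OF uc] by simp
  qed
  have right: "(?f has_integral sq_dev_integral c v b) {c..v}"
  proof (cases "c = v")
    case True
    then show ?thesis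
      using has_integral_refl(1)[of ?f c] by (simp add: sq_dev_integral_def)
  next
    case False
    then have "(a + b) / 2 \<le> c"
      using assms(1) cv by (auto simp: c_def max_def min_def split: if_splits)
    then have "(?f has_integral sq_dev_integral c v b) {c..v} \<longleftrightarrow>
               ((\<lambda>x. (x - b)^2) has_integral sq_dev_integral c v b) {c..v}"
      using assms(2) by (intro has_integral_cong) (auto intro!: min_sq_dist_eq_right)
    then show ?thesis
      using has_integral_sq_dev[OF cv] by simp
  qed
  show ?thesis
    using has_integral_combine[OF uc cv left right] .
qed

lemma set_integrable_min_sq_dist:
  fixes u v a b :: real
  shows "set_integrable lborel {u..v} (\<lambda>x. min ((x - a)^2) ((x - b)^2))"
  by (intro borel_integrable_atLeastAtMost' continuous_intros)

lemma set_integral_min_sq_dist: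
  fixes u v a b :: real
  assumes "u \<le> v" "a \<le> b"
  defines "c \<equiv> max u (min ((a + b) / 2) v)"
  shows "(LINT x:{u..v}|lborel. min ((x - a)^2) ((x - b)^2)) =
           sq_dev_integral u c a + sq_dev_integral c v b"
  using set_borel_integral_eq_integral(2)[OF set_integrable_min_sq_dist]
    integral_unique[OF has_integral_min_sq_dist[OF assms(1,2)]]
  by (simp add: c_def)

text \<open>The error of \<open>P\<close> when \<open>a\<close> serves \<open>[0, t] \<union> [3/4, s]\<close> and \<open>b\<close> the rest of the support.\<close>
definition P_split_cost :: "real \<Rightarrow> real \<Rightarrow> real \<Rightarrow> real \<Rightarrow> real" where
  "P_split_cost a b t s =
     3/2 * (sq_dev_integral 0 t a + sq_dev_integral t (1/2) b)
     + (sq_dev_integral (3/4) s a + sq_dev_integral s 1 b)"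

lemma P_density_eq:
  "3/4 * unif_pdf 0 (1/2) x + 1/4 * unif_pdf (3/4) 1 x
     = 3/2 * indicator {0..1/2} x + indicator {3/4..1} x"
  by (simp add: unif_pdf_def)

lemma qerr_P_two_points:
  fixes a b :: real
  assumes "a \<le> b"
  shows "qerr P {a, b} =
           P_split_cost a b (max 0 (min ((a + b) / 2) (1/2))) (max (3/4) (min ((a + b) / 2) 1))"
proof -
  define f where "f x = min ((x - a)^2) ((x - b)^2)" for x :: real
  have "qerr P {a, b} = (\<integral>x. f x \<partial>P)"
    by (simp add: qerr_def f_def)
  also have "\<dots> = (\<integral>x. (3/2 * indicator {0..1/2} x + indicator {3/4..1} x) *\<^sub>R f x \<partial>lborel)"
    unfolding P_def P_density_eq by (rule integral_density) (auto simp: f_def)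
  also have "\<dots> = (\<integral>x. 3/2 * (indicator {0..1/2} x *\<^sub>R f x) + indicator {3/4..1} x *\<^sub>R f x \<partial>lborel)"
    by (simp add: algebra_simps)
  also have "\<dots> = 3/2 * (LINT x:{0..1/2}|lborel. f x) + (LINT x:{3/4..1}|lborel. f x)"
    using set_integrable_min_sq_dist[of 0 "1/2" a b] set_integrable_min_sq_dist[of "3/4" 1 a b]
    unfolding set_lebesgue_integral_def set_integrable_def f_def
    by (subst Bochner_Integration.integral_add) auto
  also have "\<dots> = P_split_cost a b (max 0 (min ((a + b) / 2) (1/2))) (max (3/4) (min ((a + b) / 2) 1))"
    using set_integral_min_sq_dist[OF _ assms, of 0 "1/2"] set_integral_min_sq_dist[OF _ assms, of "3/4" 1]
    by (simp add: P_split_cost_def f_def)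
  finally show ?thesis .
qed

lemma P_split_cost_left_ge:
  fixes a b t :: real
  assumes "0 \<le> t" "t \<le> 1/2"
  shows "13/768 \<le> P_split_cost a b t (3/4)"
proof -
  define w where "w = 1 - 3/2 * t"
  have w: "w > 0"
    using assms by (simp add: w_def)
  have quadratic_pos: "0 < 3/8 * t^2 - 27/64 * t + 75/512"
  proof -
    have "3/8 * t^2 - 27/64 * t + 75/512 = 3/8 * (t - 9/16)^2 + 57/2048"
      by (simp add: power2_eq_square algebra_simps)
    moreover have "0 \<le> 3/8 * (t - 9/16)^2"
      by simp
    ultimately show ?thesis
      by linarith
  qed
  \<comment> \<open>\<open>t/2\<close> is the centroid of the cell of \<open>a\<close>; the cell of \<open>b\<close> has mass \<open>w\<close>.\<close>
  have "w * (P_split_cost a b t (3/4) - 13/768) =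
          w * (3/2 * t) * (a - t/2)^2 + (w * b - (13/32 - 3/4 * t^2))^2
          + (1/2 - t) * (3/8 * t^2 - 27/64 * t + 75/512)"
    by (simp add: P_split_cost_def sq_dev_integral_def w_def power2_eq_square power3_eq_cube
        field_simps)
  also have "\<dots> \<ge> 0"
  proof -
    have "0 \<le> w * (3/2 * t) * (a - t/2)^2"
      using w assms by simp
    moreover have "0 \<le> (1/2 - t) * (3/8 * t^2 - 27/64 * t + 75/512)"
      using assms quadratic_pos by simp
    ultimately show ?thesis
      by (simp add: add_nonneg_nonneg)
  qed
  finally show ?thesis
    using w by (simp add: zero_le_mult_iff)
qed

lemma P_split_cost_right_ge:
  fixes a b s :: real
  assumes "3/4 \<le> s" "s \<le> 1"
  shows "13/768 \<le> P_split_cost a b (1/2) s"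
proof -
  have s: "s > 0"
    using assms by simp
  \<comment> \<open>\<open>(1 + s)/2\<close> is the centroid of the cell of \<open>b\<close>; the cell of \<open>a\<close> has mass \<open>s\<close>.\<close>
  have "s * (P_split_cost a b (1/2) s - 13/768) =
          (s * a - (s^2/2 - 3/32))^2 + s * (1 - s) * (b - (1 + s)/2)^2
          + (s - 3/4) * (s^2/4 + s/32 + 3/256)"
    by (simp add: P_split_cost_def sq_dev_integral_def power2_eq_square power3_eq_cube
        field_simps)
  also have "\<dots> \<ge> 0"
    using assms by (intro add_nonneg_nonneg mult_nonneg_nonneg) auto
  finally show ?thesis
    using s by (simp add: zero_le_mult_iff)
qed

lemma qerr_P_two_points_ge:
  fixes a b :: real
  assumes "a \<le> b"
  shows "13/768 \<le> qerr P {a, b}"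
proof (cases "(a + b) / 2 \<le> 1/2")
  case True
  then have cut: "max (3/4) (min ((a + b) / 2) 1) = 3/4"
    by simp
  show ?thesis
    unfolding qerr_P_two_points[OF assms] cut by (rule P_split_cost_left_ge) auto
next
  case False
  then have cut: "max 0 (min ((a + b) / 2) (1/2)) = 1/2"
    by simp
  show ?thesis
    unfolding qerr_P_two_points[OF assms] cut by (rule P_split_cost_right_ge) auto
qed

lemma card_le_2_obtain_ordered:
  fixes A :: "'a::linorder set"
  assumes "finite A" "A \<noteq> {}" "card A \<le> 2"
  obtains a b where "a \<le> b" "A = {a, b}"
proof -
  have "card A = 1 \<or> card A = 2"
    using assms card_0_eq by fastforce
  then show ?thesis
  proof
    assume "card A = 1"
    then obtain a where "A = {a}"
      by (auto simp: card_1_singleton_iff)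
    then show ?thesis
      using that[of a a] by simp
  next
    assume "card A = 2"
    then obtain a b where "A = {a, b}"
      by (auto simp: card_2_iff)
    then show ?thesis
      using that[of a b] that[of b a] by (cases "a \<le> b") (auto simp: insert_commute)
  qed
qed

theorem lemma3p3:
  shows "optimal_n_means P 2 {1/4, 7/8} \<and> Vn P 2 = 13/768"
proof -
  have opt: "qerr P {1/4, 7/8} = 13/768"
    by (simp add: qerr_P_two_points P_split_cost_def sq_dev_integral_def power3_eq_cube)
  have "Vn P 2 = 13/768"
    unfolding Vn_def
  proof (rule cInf_eq_minimum)
    show "13/768 \<in> {qerr P \<alpha> |\<alpha>. finite \<alpha> \<and> \<alpha> \<noteq> {} \<and> card \<alpha> \<le> 2}"
      using opt by (intro CollectI exI[of _ "{1/4, 7/8}"]) auto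
  next
    fix e
    assume "e \<in> {qerr P \<alpha> |\<alpha>. finite \<alpha> \<and> \<alpha> \<noteq> {} \<and> card \<alpha> \<le> 2}"
    then obtain A where "e = qerr P A" "finite A" "A \<noteq> {}" "card A \<le> 2"
      by auto
    then show "13/768 \<le> e"
      by (metis card_le_2_obtain_ordered qerr_P_two_points_ge)
  qed
  with opt show ?thesis
    by (simp add: optimal_n_means_def)
qed

end
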